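(* Let $A$ be a finite abelian group of odd order and $K=A\times\hat{A}$. Then the orbits of $\mathrm{Sp}(K)$ on $K$ coincide with the orbits of $\mathrm{Aut}(K)$ on $K$.
   Context: $\hat A$ is the Pontryagin dual of $A$ (homomorphisms $A\to\mathbb{T}$), written additively, with $\langle a,\alpha\rangle$ the value of $\alpha\in\hat A$ at $a\in A$. The symplectic form on $K$ is $[(a_1,\alpha_1),(a_2,\alpha_2)]=\langle a_2,\alpha_1\rangle\langle a_1,\alpha_2\rangle^{-1}$, and $\mathrm{Sp}(K)=\{\sigma\in\mathrm{Aut}(K):[\sigma(u_1),\sigma(u_2)]=[u_1,u_2]\ \forall u_1,u_2\in K\}$. *)

theory Defs
  imports Complex_Main "HOL-Algebra.Group"
begin

text \<open>Pontryagin dual of a finite abelian group G: homomorphisms from G into the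
  circle group T = {z. |z| = 1} (a multiplicative subgroup of the complex numbers),
  represented as extensional functions on the carrier of G.\<close>
definition dual :: "('a, 'b) monoid_scheme \<Rightarrow> ('a \<Rightarrow> complex) set" where
  "dual G = {\<chi>. \<chi> \<in> carrier G \<rightarrow>\<^sub>E {z::complex. cmod z = 1} \<and>
      (\<forall>x\<in>carrier G. \<forall>y\<in>carrier G. \<chi> (x \<otimes>\<^bsub>G\<^esub> y) = \<chi> x * \<chi> y)}"

definition KK :: "('a, 'b) monoid_scheme \<Rightarrow> ('a \<times> ('a \<Rightarrow> complex)) monoid" where
  "KK G = \<lparr>carrier = carrier G \<times> dual G,
           mult = (\<lambda>(a, \<chi>) (b, \<psi>). (a \<otimes>\<^bsub>G\<^esub> b, \<lambda>x\<in>carrier G. \<chi> x * \<psi> x)),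
           one = (\<one>\<^bsub>G\<^esub>, \<lambda>x\<in>carrier G. 1)\<rparr>"

definition sympl :: "('a \<times> ('a \<Rightarrow> complex)) \<Rightarrow> ('a \<times> ('a \<Rightarrow> complex)) \<Rightarrow> complex" where
  "sympl u1 u2 = snd u1 (fst u2) * inverse (snd u2 (fst u1))"

definition AutK :: "('a, 'b) monoid_scheme \<Rightarrow> (('a \<times> ('a \<Rightarrow> complex)) \<Rightarrow> ('a \<times> ('a \<Rightarrow> complex))) set" where
  "AutK G = iso (KK G) (KK G)"

definition SpK :: "('a, 'b) monoid_scheme \<Rightarrow> (('a \<times> ('a \<Rightarrow> complex)) \<Rightarrow> ('a \<times> ('a \<Rightarrow> complex))) set" where
  "SpK G = {\<sigma> \<in> AutK G. \<forall>u1\<in>carrier (KK G). \<forall>u2\<in>carrier (KK G).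
              sympl (\<sigma> u1) (\<sigma> u2) = sympl u1 u2}"

end

theory Submission
  imports Defs "HOL-Algebra.Multiplicative_Group" "HOL-Computational_Algebra.Primes"
begin

text \<open>The form \<open>[-,-]\<close> on \<open>K = A \<times> dual A\<close> is alternating, and nondegenerate in the strong
  sense that an element orthogonal to the \<open>m\<close>-torsion of \<open>K\<close> is an \<open>m\<close>-th power (every
  character of a subgroup extends to \<open>A\<close>). For such a form the \<open>Sp(K)\<close>-orbit of \<open>u\<close> is
  determined by the data "\<open>u\<^sup>a\<close> is a \<open>b\<close>-th power", which every automorphism preserves.
  This is proved by induction on \<open>|mK|\<close>, descending from \<open>mK\<close> to \<open>pmK\<close> for a prime \<open>p\<close>.
  The moves are symplectic transvections \<open>y \<mapsto> y z\<^sup>c\<^sup>k\<close>, where \<open>[y, z] = \<zeta>\<^sup>k\<close>: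
  they shift an element of \<open>mK\<close> by \<open>z\<^sup>m\<close> whenever \<open>z\<^sup>p\<^sup>m = 1\<close> and \<open>z\<close> pairs
  nontrivially with it. The argument does not use that \<open>|A|\<close> is odd.\<close>

section \<open>Roots of unity\<close>

definition unit_root :: "nat \<Rightarrow> nat \<Rightarrow> complex" where
  "unit_root N k = cis (2 * pi * real k / real N)"

lemma unit_root_add: "unit_root N (a + b) = unit_root N a * unit_root N b"
  by (simp add: unit_root_def cis_mult add_divide_distrib distrib_left)

lemma unit_root_power: "unit_root N k ^ n = unit_root N (k * n)"
  by (simp add: unit_root_def DeMoivre mult_ac)

lemma norm_unit_root [simp]: "cmod (unit_root N k) = 1"
  by (simp add: unit_root_def)

lemma unit_root_0 [simp]: "unit_root N 0 = 1"
  by (simp add: unit_root_def)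

lemma unit_root_nonzero: "unit_root N k \<noteq> 0"
  by (metis norm_unit_root norm_zero zero_neq_one)

lemma unit_root_mod:
  assumes "N > 0"
  shows "unit_root N a = unit_root N (a mod N)"
proof -
  have "2 * pi * real (N * (a div N)) / real N = 2 * pi * real (a div N)"
    using assms by simp
  then have "unit_root N (N * (a div N)) = 1"
    by (simp add: unit_root_def cis_multiple_2pi)
  then show ?thesis
    using unit_root_add[of N "N * (a div N)" "a mod N"] by simp
qed

lemma unit_root_eq_iff:
  assumes "N > 0"
  shows "unit_root N a = unit_root N b \<longleftrightarrow> a mod N = b mod N"
proof -
  have "inj_on (unit_root N) {..<N}"
    using bij_betw_roots_unity[OF assms] unfolding bij_betw_def unit_root_def[abs_def] by simp
  then show ?thesis
    using assms unit_root_mod[OF assms, of a] unit_root_mod[OF assms, of b]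
    by (auto simp: inj_on_def)
qed

lemma unit_root_eq_1_iff:
  assumes "N > 0"
  shows "unit_root N a = 1 \<longleftrightarrow> N dvd a"
  using unit_root_eq_iff[OF assms, of a 0] by (simp add: dvd_eq_mod_eq_0)

lemma exists_nontrivial_root_of_unity:
  assumes "r \<noteq> 1" "0 < r"
  obtains z :: complex where "cmod z = 1" "z ^ r = 1" "z \<noteq> 1"
proof
  show "cmod (unit_root r 1) = 1" "unit_root r 1 ^ r = 1" "unit_root r 1 \<noteq> 1"
    using assms unit_root_eq_1_iff[OF assms(2)] by (simp_all add: unit_root_power)
qed

text \<open>The discrete logarithm of an \<open>N\<close>-th root of unity; unspecified for other arguments.\<close>

definition root_index :: "nat \<Rightarrow> complex \<Rightarrow> nat" where
  "root_index N z = (SOME k. k < N \<and> unit_root N k = z)"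

lemma unit_root_root_index:
  assumes "N > 0" "z ^ N = 1"
  shows "root_index N z < N" "unit_root N (root_index N z) = z"
proof -
  have "z \<in> unit_root N ` {..<N}"
    using bij_betw_roots_unity[OF assms(1)] assms(2) unfolding bij_betw_def unit_root_def[abs_def]
    by auto
  then obtain k where "k < N" "unit_root N k = z" by auto
  then have "root_index N z < N \<and> unit_root N (root_index N z) = z"
    unfolding root_index_def by (metis (mono_tags, lifting) someI)
  then show "root_index N z < N" "unit_root N (root_index N z) = z" by auto
qed

lemma exists_nth_root_unit_circle:
  assumes "cmod c = 1" "0 < r"
  obtains z where "cmod z = 1" "z ^ r = c"
proof
  show "cmod (cis (Arg c / real r)) = 1" by simp
  have "cis (Arg c / real r) ^ r = cis (Arg c)"
    using assms by (simp add: DeMoivre)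
  also have "\<dots> = sgn c"
    using assms by (intro cis_Arg) auto
  also have "\<dots> = c"
    using assms by (simp add: sgn_eq)
  finally show "cis (Arg c / real r) ^ r = c" .
qed

lemma exists_mult_mod_eq:
  fixes p m k :: nat
  assumes p: "prime p" and m: "0 < m" and k: "0 < k" "k < p * m" and dvd: "p * m dvd k * p"
  obtains c t where "c * k = p * m * t + m"
proof -
  have "m dvd k"
    using dvd prime_gt_0_nat[OF p] by (simp add: mult.commute[of p])
  then obtain j where j: "k = m * j" ..
  have "j < p"
    using k(2) j m by (simp add: mult.commute[of p])
  moreover have "j \<noteq> 0"
    using k j by simp
  ultimately have "coprime j p"
    using p by (metis coprime_commute dvd_imp_le neq0_conv not_le prime_imp_coprime_nat)
  then obtain c t where "j * c = p * t + 1"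
    using bezout_nat[of j p] \<open>j \<noteq> 0\<close> by auto
  then have "c * k = p * m * t + m"
    using j by (metis add_mult_distrib2 mult.assoc mult.commute mult.left_commute nat_mult_1_right)
  then show ?thesis ..
qed

section \<open>Subgroups of \<open>m\<close>-th powers\<close>

lemma (in group) subgroup_nat_pow_closed:
  assumes "subgroup S G" "x \<in> S"
  shows "x [^] (n::nat) \<in> S"
proof (induction n)
  case 0
  then show ?case using subgroup.one_closed[OF assms(1)] by simp
next
  case (Suc n)
  then show ?case using subgroup.m_closed[OF assms(1)] assms(2) by simp
qed

lemma (in group) iso_nat_pow:
  assumes "\<sigma> \<in> iso G G" "x \<in> carrier G"
  shows "\<sigma> (x [^] (n::nat)) = \<sigma> x [^] n"
  using assms hom_nat_pow[of \<sigma> G G x n] is_group unfolding iso_def by auto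

lemma (in group) pow_mod_eq:
  assumes "z \<in> carrier G" "z [^] N = \<one>" "a mod N = b mod N"
  shows "z [^] (a::nat) = z [^] b"
proof -
  have "z [^] a' = z [^] (a' mod N)" for a'
  proof -
    have "z [^] a' = (z [^] N) [^] (a' div N) \<otimes> z [^] (a' mod N)"
      using assms(1) by (simp add: nat_pow_pow nat_pow_mult)
    then show ?thesis
      using assms(1,2) by simp
  qed
  then show ?thesis
    using assms(3) by metis
qed

lemma (in group) exists_pow_of_prime_order:
  assumes fin: "finite (carrier G)" and x: "x \<in> carrier G" "x \<noteq> \<one>"
  obtains p k where "prime (p::nat)" "x [^] (k::nat) \<noteq> \<one>" "(x [^] k) [^] p = \<one>"
proof -
  have "ord x \<noteq> 1"
    using ord_eq_1[OF x(1)] x(2) by simp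
  then obtain p where p: "prime p" "p dvd ord x"
    using prime_factor_nat by blast
  define k where "k = ord x div p"
  have kp: "k * p = ord x"
    using p unfolding k_def by simp
  have "0 < k"
    using kp ord_ge_1[OF fin x(1)] by (cases k) auto
  moreover have "k < ord x"
    using kp \<open>0 < k\<close> prime_gt_1_nat[OF p(1)] by (metis mult.right_neutral mult_less_cancel1)
  ultimately have "x [^] k \<noteq> \<one>"
    using pow_eq_id[OF x(1)] by (auto dest: nat_dvd_not_less)
  moreover have "(x [^] k) [^] p = \<one>"
    using x kp by (simp add: nat_pow_pow)
  ultimately show ?thesis
    using that p(1) by blast
qed

definition (in monoid) nth_powers :: "nat \<Rightarrow> 'a set" where
  "nth_powers m = (\<lambda>x. x [^] m) ` carrier G"

context comm_group
begin

lemma subgroup_nth_powers: "subgroup (nth_powers m) G"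
proof (rule subgroupI)
  show "nth_powers m \<subseteq> carrier G" "nth_powers m \<noteq> {}"
    by (auto simp: nth_powers_def)
next
  fix a b assume "a \<in> nth_powers m" "b \<in> nth_powers m"
  then obtain x y where xy: "x \<in> carrier G" "y \<in> carrier G" "a = x [^] m" "b = y [^] m"
    by (auto simp: nth_powers_def)
  have "inv a = inv x [^] m" "a \<otimes> b = (x \<otimes> y) [^] m"
    using xy by (simp_all add: nat_pow_inv nat_pow_distrib)
  then show "inv a \<in> nth_powers m" "a \<otimes> b \<in> nth_powers m"
    using xy by (auto simp: nth_powers_def)
qed

lemma nth_powers_subset: "nth_powers m \<subseteq> carrier G"
  by (auto simp: nth_powers_def)

lemma nth_powers_1 [simp]: "nth_powers 1 = carrier G"
  by (auto simp: nth_powers_def)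

lemma pow_in_nth_powers [intro]: "x \<in> carrier G \<Longrightarrow> x [^] m \<in> nth_powers m"
  by (auto simp: nth_powers_def)

lemma pow_mem_nth_powers_mult:
  assumes "a \<in> nth_powers m"
  shows "a [^] p \<in> nth_powers (p * m)"
  using assms by (auto simp: nth_powers_def nat_pow_pow mult.commute)

lemma nth_powers_mult_subset: "nth_powers (p * m) \<subseteq> nth_powers m"
  by (auto simp: nth_powers_def nat_pow_pow[symmetric])

lemma card_nth_powers_mult_less:
  assumes fin: "finite (carrier G)"
    and y: "y \<in> nth_powers m" "y \<noteq> \<one>" "y [^] p = \<one>"
  shows "card (nth_powers (p * m)) < card (nth_powers m)"
proof -
  have fm: "finite (nth_powers m)"
    using fin nth_powers_subset finite_subset by blast
  have "nth_powers (p * m) \<noteq> nth_powers m"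
  proof
    assume eq: "nth_powers (p * m) = nth_powers m"
    have "(\<lambda>t. t [^] p) ` nth_powers m = nth_powers (p * m)"
      by (force simp: nth_powers_def nat_pow_pow mult.commute)
    then have "inj_on (\<lambda>t. t [^] p) (nth_powers m)"
      using fm eq eq_card_imp_inj_on by metis
    then show False
      using y subgroup.one_closed[OF subgroup_nth_powers] by (auto simp: inj_on_def)
  qed
  then show ?thesis
    using nth_powers_mult_subset[of p m] fm by (simp add: psubset_card_mono)
qed

lemma exists_prime_card_nth_powers_less:
  assumes fin: "finite (carrier G)" and x: "x \<in> nth_powers m" "x \<noteq> \<one>"
  obtains p where "prime (p::nat)" "card (nth_powers (p * m)) < card (nth_powers m)"
proof -
  have "x \<in> carrier G"
    using x(1) nth_powers_subset by blast
  then obtain p k where pk: "prime (p::nat)" "x [^] (k::nat) \<noteq> \<one>" "(x [^] k) [^] p = \<one>"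
    using x(2) by (rule exists_pow_of_prime_order[OF fin])
  have "x [^] k \<in> nth_powers m"
    using subgroup_nat_pow_closed[OF subgroup_nth_powers x(1)] .
  then show ?thesis
    using that[OF pk(1) card_nth_powers_mult_less[OF fin _ pk(2,3)]] by blast
qed

lemma iso_mem_nth_powers_iff:
  assumes \<sigma>: "\<sigma> \<in> iso G G" and x: "x \<in> carrier G"
  shows "\<sigma> x \<in> nth_powers m \<longleftrightarrow> x \<in> nth_powers m"
proof -
  have bij: "bij_betw \<sigma> (carrier G) (carrier G)"
    using \<sigma> by (simp add: iso_def)
  show ?thesis
  proof
    assume "\<sigma> x \<in> nth_powers m"
    then obtain y where y: "y \<in> carrier G" "\<sigma> x = y [^] m"
      by (auto simp: nth_powers_def)
    then obtain y0 where y0: "y0 \<in> carrier G" "y = \<sigma> y0"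
      using bij by (auto simp: bij_betw_def)
    then have "x = y0 [^] m"
      using bij x y iso_nat_pow[OF \<sigma> y0(1)] by (auto simp: bij_betw_def inj_on_def)
    then show "x \<in> nth_powers m"
      using y0 by auto
  qed (use x iso_nat_pow[OF \<sigma>] \<sigma> in \<open>auto simp: nth_powers_def iso_def hom_def\<close>)
qed

end

text \<open>Within \<open>mK\<close>, this is the complete invariant of the orbits of the symplectic group.\<close>

definition (in monoid) same_heights :: "nat \<Rightarrow> 'a \<Rightarrow> 'a \<Rightarrow> bool" where
  "same_heights m u v \<longleftrightarrow>
     (\<forall>(a::nat) (b::nat). 0 < a \<longrightarrow> 0 < b \<longrightarrow> (u [^] a \<in> nth_powers (b * m) \<longleftrightarrow> v [^] a \<in> nth_powers (b * m)))"

lemma (in comm_group) same_heights_iso: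
  assumes "\<sigma> \<in> iso G G" "u \<in> carrier G"
  shows "same_heights 1 u (\<sigma> u)"
  using assms iso_mem_nth_powers_iff[OF assms(1)] iso_nat_pow[OF assms, symmetric]
  by (simp add: same_heights_def)

lemma (in monoid) same_heights_mem_iff:
  assumes "same_heights m u v" "0 < b" "u \<in> carrier G" "v \<in> carrier G"
  shows "u \<in> nth_powers (b * m) \<longleftrightarrow> v \<in> nth_powers (b * m)"
  using assms unfolding same_heights_def by (metis nat_pow_eone zero_less_one)

lemma (in monoid) same_heights_mult:
  assumes "same_heights m u v" "0 < p"
  shows "same_heights (p * m) u v"
  using assms unfolding same_heights_def by (metis mult.assoc mult_pos_pos)

lemma (in monoid) same_heights_pow:
  assumes "same_heights m u v" "0 < p" "u \<in> carrier G" "v \<in> carrier G"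
  shows "same_heights (p * m) (u [^] p) (v [^] p)"
  unfolding same_heights_def
proof (intro allI impI)
  fix a b :: nat assume ab: "0 < a" "0 < b"
  then show "(u [^] p) [^] a \<in> nth_powers (b * (p * m)) \<longleftrightarrow> (v [^] p) [^] a \<in> nth_powers (b * (p * m))"
    using assms spec[OF spec[OF assms(1)[unfolded same_heights_def]], of "p * a" "b * p"]
    by (simp add: nat_pow_pow mult.assoc)
qed

section \<open>Alternating forms and symplectic transvections\<close>

locale symplectic_group = comm_group K for K (structure) +
  fixes \<omega> :: "'a \<Rightarrow> 'a \<Rightarrow> complex"
  assumes finite_carrier: "finite (carrier K)"
    and bilinear_left:
      "\<lbrakk>x \<in> carrier K; y \<in> carrier K; z \<in> carrier K\<rbrakk> \<Longrightarrow> \<omega> (x \<otimes> y) z = \<omega> x z * \<omega> y z"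
    and bilinear_right:
      "\<lbrakk>x \<in> carrier K; y \<in> carrier K; z \<in> carrier K\<rbrakk> \<Longrightarrow> \<omega> x (y \<otimes> z) = \<omega> x y * \<omega> x z"
    and alternating: "x \<in> carrier K \<Longrightarrow> \<omega> x x = 1"
    and nth_power_if_orthogonal_to_torsion:
      "\<lbrakk>0 < m; u \<in> carrier K; \<And>v. \<lbrakk>v \<in> carrier K; v [^] m = \<one>\<rbrakk> \<Longrightarrow> \<omega> u v = 1\<rbrakk>
       \<Longrightarrow> u \<in> nth_powers m"
begin

definition Sp :: "('a \<Rightarrow> 'a) set" where
  "Sp = {\<sigma> \<in> iso K K. \<forall>x\<in>carrier K. \<forall>y\<in>carrier K. \<omega> (\<sigma> x) (\<sigma> y) = \<omega> x y}"

lemma Sp_id: "(\<lambda>x. x) \<in> Sp"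
  unfolding Sp_def using iso_set_refl by auto

lemma Sp_comp:
  assumes "\<sigma> \<in> Sp" "\<tau> \<in> Sp"
  shows "\<sigma> \<circ> \<tau> \<in> Sp"
proof -
  have "\<tau> x \<in> carrier K" if "x \<in> carrier K" for x
    using assms(2) that unfolding Sp_def iso_def hom_def by auto
  then show ?thesis
    using assms iso_set_trans unfolding Sp_def by auto
qed

lemma \<omega>_skew:
  assumes "x \<in> carrier K" "y \<in> carrier K"
  shows "\<omega> x y * \<omega> y x = 1"
proof -
  have "1 = \<omega> (x \<otimes> y) (x \<otimes> y)"
    using assms alternating by simp
  also have "\<dots> = (\<omega> x x * \<omega> x y) * (\<omega> y x * \<omega> y y)"
    using assms by (simp add: bilinear_left bilinear_right)
  finally show ?thesis
    using assms alternating by simp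
qed

lemma \<omega>_nonzero: "x \<in> carrier K \<Longrightarrow> y \<in> carrier K \<Longrightarrow> \<omega> x y \<noteq> 0"
  using \<omega>_skew by fastforce

lemma \<omega>_swap: "x \<in> carrier K \<Longrightarrow> y \<in> carrier K \<Longrightarrow> \<omega> y x = inverse (\<omega> x y)"
  using \<omega>_skew \<omega>_nonzero by (simp add: field_simps)

lemma \<omega>_one_right [simp]:
  assumes "x \<in> carrier K"
  shows "\<omega> x \<one> = 1"
  using bilinear_right[OF assms one_closed one_closed] \<omega>_nonzero[OF assms one_closed] by simp

lemma \<omega>_one_left [simp]:
  assumes "x \<in> carrier K"
  shows "\<omega> \<one> x = 1"
  using bilinear_left[OF one_closed one_closed assms] \<omega>_nonzero[OF one_closed assms] by simp

lemma \<omega>_pow_left: "x \<in> carrier K \<Longrightarrow> y \<in> carrier K \<Longrightarrow> \<omega> (x [^] (n::nat)) y = \<omega> x y ^ n"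
  by (induction n) (simp_all add: bilinear_left)

lemma \<omega>_pow_right: "x \<in> carrier K \<Longrightarrow> y \<in> carrier K \<Longrightarrow> \<omega> x (y [^] (n::nat)) = \<omega> x y ^ n"
  by (induction n) (simp_all add: bilinear_right)

lemma \<omega>_inv_right:
  assumes "x \<in> carrier K" "y \<in> carrier K"
  shows "\<omega> x (inv y) = inverse (\<omega> x y)"
proof -
  have "\<omega> x (inv y) * \<omega> x y = 1"
    using bilinear_right[of x "inv y" y] assms by simp
  then show ?thesis
    using \<omega>_nonzero[OF assms] by (simp add: field_simps)
qed

text \<open>If \<open>\<omega> y z = \<zeta>\<^sub>N\<^sup>k\<close> then \<open>transvection N z c y = y z\<^sup>c\<^sup>k\<close>; for \<open>z\<^sup>N = \<one>\<close> this is a symplectic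
  transvection along \<open>z\<close>.\<close>

definition transvection :: "nat \<Rightarrow> 'a \<Rightarrow> nat \<Rightarrow> 'a \<Rightarrow> 'a" where
  "transvection N z c y = y \<otimes> z [^] (c * root_index N (\<omega> y z))"

context
  fixes N :: nat and z :: 'a
  assumes N: "N > 0" and z: "z \<in> carrier K" and zN: "z [^] N = \<one>"
begin

lemma unit_root_index_\<omega>:
  assumes "y \<in> carrier K"
  shows "unit_root N (root_index N (\<omega> y z)) = \<omega> y z"
  using unit_root_root_index(2)[OF N] \<omega>_pow_right[OF assms z, of N] zN assms by simp

lemma transvection_closed: "y \<in> carrier K \<Longrightarrow> transvection N z c y \<in> carrier K"
  using z by (simp add: transvection_def)

lemma \<omega>_transvection: "y \<in> carrier K \<Longrightarrow> \<omega> (transvection N z c y) z = \<omega> y z"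
  using z by (simp add: transvection_def bilinear_left \<omega>_pow_left alternating)

lemma transvection_mult:
  assumes y: "y \<in> carrier K" and y': "y' \<in> carrier K"
  shows "transvection N z c (y \<otimes> y') = transvection N z c y \<otimes> transvection N z c y'"
proof -
  define k1 k2 k where "k1 = root_index N (\<omega> y z)" and "k2 = root_index N (\<omega> y' z)"
    and "k = root_index N (\<omega> (y \<otimes> y') z)"
  have "unit_root N k = unit_root N (k1 + k2)"
    using unit_root_index_\<omega>[of "y \<otimes> y'"] unit_root_index_\<omega>[OF y] unit_root_index_\<omega>[OF y'] y y' z
    unfolding k1_def k2_def k_def by (simp add: unit_root_add bilinear_left)
  then have "(c * k) mod N = (c * k1 + c * k2) mod N"
    using unit_root_eq_iff[OF N] by (metis distrib_left mod_mult_right_eq)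
  then have "z [^] (c * k) = z [^] (c * k1 + c * k2)"
    by (rule pow_mod_eq[OF z zN])
  also have "\<dots> = z [^] (c * k1) \<otimes> z [^] (c * k2)"
    using z by (simp add: nat_pow_mult)
  finally show ?thesis
    unfolding transvection_def k_def[symmetric] k1_def[symmetric] k2_def[symmetric]
    using y y' z by (simp add: m_assoc m_lcomm)
qed

lemma transvection_transvection:
  assumes y: "y \<in> carrier K" and d: "N dvd c + c'"
  shows "transvection N z c' (transvection N z c y) = y"
proof -
  define k where "k = root_index N (\<omega> y z)"
  have "z [^] ((c + c') * k) = z [^] (0::nat)"
    by (rule pow_mod_eq[OF z zN]) (use d in auto)
  then have "z [^] (c * k) \<otimes> z [^] (c' * k) = \<one>"
    using z by (simp add: nat_pow_mult distrib_right)
  moreover have "transvection N z c' (transvection N z c y) = y \<otimes> (z [^] (c * k) \<otimes> z [^] (c' * k))"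
    using \<omega>_transvection[OF y, of c] y z
    unfolding transvection_def[of N z c' "transvection N z c y"] k_def
    by (simp add: transvection_def m_assoc)
  ultimately show ?thesis
    using y by simp
qed

lemma \<omega>_transvection_transvection:
  assumes y: "y \<in> carrier K" and y': "y' \<in> carrier K"
  shows "\<omega> (transvection N z c y) (transvection N z c y') = \<omega> y y'"
proof -
  define k1 k2 where "k1 = root_index N (\<omega> y z)" and "k2 = root_index N (\<omega> y' z)"
  define a b where "a = c * k1" and "b = c * k2"
  have r1: "\<omega> y z = unit_root N k1"
    using unit_root_index_\<omega>[OF y] unfolding k1_def by simp
  have r2: "\<omega> z y' = inverse (unit_root N k2)"
    using unit_root_index_\<omega>[OF y'] \<omega>_swap[OF y' z] unfolding k2_def by simp
  have "\<omega> (transvection N z c y) (transvection N z c y') = \<omega> (y \<otimes> z [^] a) (y' \<otimes> z [^] b)"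
    by (simp add: transvection_def k1_def k2_def a_def b_def)
  also have "\<dots> = \<omega> y (y' \<otimes> z [^] b) * \<omega> (z [^] a) (y' \<otimes> z [^] b)"
    using y y' z by (simp add: bilinear_left)
  also have "\<omega> y (y' \<otimes> z [^] b) = \<omega> y y' * \<omega> y z ^ b"
    using y y' z by (simp add: bilinear_right \<omega>_pow_right)
  also have "\<omega> (z [^] a) (y' \<otimes> z [^] b) = \<omega> z y' ^ a * \<omega> z z ^ (a * b)"
    using y y' z by (simp add: bilinear_right \<omega>_pow_left \<omega>_pow_right power_mult)
  also have "\<omega> y z ^ b = unit_root N (k1 * b)"
    unfolding r1 by (rule unit_root_power)
  also have "\<omega> z y' ^ a = inverse (unit_root N (k1 * b))"
    unfolding r2 power_inverse unit_root_power a_def b_def by (simp add: mult_ac)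
  finally show ?thesis
    using z alternating unit_root_nonzero by simp
qed

lemma transvection_Sp: "transvection N z c \<in> Sp"
proof -
  define c' where "c' = c * (N - 1)"
  have "c + c' = c * N"
    using N unfolding c'_def by (cases N) auto
  then have inverse: "N dvd c + c'" "N dvd c' + c"
    by (simp_all add: add.commute)
  have "bij_betw (transvection N z c) (carrier K) (carrier K)"
  proof (rule bij_betwI[where g = "transvection N z c'"])
    show "transvection N z c \<in> carrier K \<rightarrow> carrier K" "transvection N z c' \<in> carrier K \<rightarrow> carrier K"
      using transvection_closed by blast+
    show "transvection N z c' (transvection N z c x) = x"
      and "transvection N z c (transvection N z c' x) = x" if "x \<in> carrier K" for x
      using transvection_transvection[OF that] inverse by blast+
  qed
  moreover have "transvection N z c \<in> hom K K"
    unfolding hom_def using transvection_closed transvection_mult by (simp add: Pi_iff)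
  ultimately show ?thesis
    unfolding Sp_def iso_def using \<omega>_transvection_transvection by blast
qed

end

section \<open>Orbits of the symplectic group\<close>

lemma transvection_shift:
  assumes p: "prime p" and m: "0 < m" and y: "y \<in> nth_powers m" and z: "z \<in> carrier K"
    and zp: "z [^] (p * m) = \<one>" and yz: "\<omega> y z \<noteq> 1"
  shows "\<exists>T\<in>Sp. T y = y \<otimes> z [^] m"
proof -
  define N where "N = p * m"
  have N: "N > 0"
    using prime_gt_0_nat[OF p] m unfolding N_def by simp
  obtain x where x: "x \<in> carrier K" "y = x [^] m"
    using y unfolding nth_powers_def by blast
  have yc: "y \<in> carrier K" using x by simp
  have zN: "z [^] N = \<one>" using zp unfolding N_def .
  define k where "k = root_index N (\<omega> y z)"
  have "\<omega> y z ^ N = 1"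
    using \<omega>_pow_right[OF yc z, of N] zN yc by simp
  then have kN: "k < N" and rk: "unit_root N k = \<omega> y z"
    using unit_root_root_index[OF N] unfolding k_def by blast+
  \<comment> \<open>\<open>\<omega> y z\<close> is a \<open>p\<close>-th root of unity because \<open>y\<close> is an \<open>m\<close>-th power\<close>
  have "\<omega> y z ^ p = \<omega> x (z [^] (p * m))"
    using x z by (simp add: \<omega>_pow_left \<omega>_pow_right power_mult mult.commute)
  then have "unit_root N (k * p) = 1"
    using rk zp x by (simp add: unit_root_power[symmetric])
  then have "p * m dvd k * p"
    using unit_root_eq_1_iff[OF N] unfolding N_def by blast
  moreover have "0 < k"
    using yz rk by (metis gr0I unit_root_0)
  ultimately obtain c t where "c * k = p * m * t + m"
    using kN unfolding N_def by (metis exists_mult_mod_eq[OF p m])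
  then have "c * k = N * t + m"
    unfolding N_def .
  then have "transvection N z c y = y \<otimes> ((z [^] N) [^] t \<otimes> z [^] m)"
    using z unfolding transvection_def k_def[symmetric]
    by (simp add: nat_pow_mult[symmetric] nat_pow_pow)
  then have "transvection N z c y = y \<otimes> z [^] m"
    using zN z by simp
  then show ?thesis
    using transvection_Sp[OF N z zN] by blast
qed

lemma exists_torsion_nonorthogonal_to_both:
  assumes n: "0 < n" and u: "u \<in> carrier K" "u \<notin> nth_powers n"
    and v: "v \<in> carrier K" "v \<notin> nth_powers n"
  obtains w where "w \<in> carrier K" "w [^] n = \<one>" "\<omega> u w \<noteq> 1" "\<omega> v w \<noteq> 1"
proof -
  obtain z1 where z1: "z1 \<in> carrier K" "z1 [^] n = \<one>" "\<omega> u z1 \<noteq> 1"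
    using nth_power_if_orthogonal_to_torsion[OF n u(1)] u(2) by blast
  obtain z2 where z2: "z2 \<in> carrier K" "z2 [^] n = \<one>" "\<omega> v z2 \<noteq> 1"
    using nth_power_if_orthogonal_to_torsion[OF n v(1)] v(2) by blast
  show ?thesis
  proof (cases "\<omega> v z1 = 1 \<and> \<omega> u z2 = 1")
    case True
    have "(z1 \<otimes> z2) [^] n = \<one>"
      using z1 z2 by (simp add: nat_pow_distrib)
    moreover have "\<omega> u (z1 \<otimes> z2) \<noteq> 1" "\<omega> v (z1 \<otimes> z2) \<noteq> 1"
      using z1 z2 u v True by (simp_all add: bilinear_right)
    ultimately show ?thesis
      using that[of "z1 \<otimes> z2"] z1(1) z2(1) by simp
  next
    case False
    then show ?thesis
      using that z1 z2 by blast
  qed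
qed

lemma \<omega>_shifted_pair:
  fixes m :: nat
  assumes u: "u \<in> carrier K" and w0: "w0 \<in> carrier K" and w1: "w1 \<in> carrier K"
    and uw0: "\<omega> u w0 = 1"
  shows "\<omega> (u \<otimes> w1 [^] m) (w0 \<otimes> inv w1) = inverse (\<omega> (u \<otimes> w0 [^] m) w1)"
proof -
  have "\<omega> (u \<otimes> w1 [^] m) (w0 \<otimes> inv w1) = inverse (\<omega> u w1) * \<omega> w1 w0 ^ m"
    using u w0 w1 uw0
    by (simp add: bilinear_left bilinear_right \<omega>_pow_left \<omega>_inv_right alternating)
  also have "\<dots> = inverse (\<omega> (u \<otimes> w0 [^] m) w1)"
    using u w0 w1 \<omega>_swap[OF w0 w1]
    by (simp add: bilinear_left \<omega>_pow_left power_inverse)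
  finally show ?thesis .
qed

lemma Sp_moves_equal_pth_powers:
  assumes p: "prime p" and m: "0 < m" and u: "u \<in> nth_powers m" and v: "v \<in> nth_powers m"
    and u_not: "u \<notin> nth_powers (p * m)" and v_not: "v \<notin> nth_powers (p * m)"
    and uv: "u [^] p = v [^] p"
  shows "\<exists>T\<in>Sp. T u = v"
proof -
  have uc: "u \<in> carrier K" and vc: "v \<in> carrier K"
    using u v nth_powers_subset by auto
  have "v \<otimes> inv u \<in> nth_powers m"
    using v u subgroup_nth_powers by (simp add: subgroup.m_closed subgroup.m_inv_closed)
  then obtain w0 where w0: "w0 \<in> carrier K" "v \<otimes> inv u = w0 [^] m"
    unfolding nth_powers_def by blast
  have v_eq: "v = u \<otimes> w0 [^] m"
    using uc vc by (simp add: w0(2)[symmetric] m_lcomm[of u v])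
  have "(v \<otimes> inv u) [^] p = \<one>"
    using uc vc uv by (simp add: nat_pow_distrib nat_pow_inv)
  then have w0p: "w0 [^] (p * m) = \<one>"
    using w0 by (simp add: nat_pow_pow mult.commute)
  show ?thesis
  proof (cases "\<omega> u w0 = 1")
    case False
    then show ?thesis
      using transvection_shift[OF p m u w0(1) w0p] v_eq by simp
  next
    case True
    text \<open>Move \<open>u\<close> first to \<open>u2\<close>, chosen so that the remaining step pairs nontrivially.\<close>
    have "0 < p * m"
      using prime_gt_0_nat[OF p] m by simp
    then obtain w1 where w1: "w1 \<in> carrier K" "w1 [^] (p * m) = \<one>" "\<omega> u w1 \<noteq> 1" "\<omega> v w1 \<noteq> 1"
      using exists_torsion_nonorthogonal_to_both[OF _ uc u_not vc v_not] by blast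
    define u2 z where "u2 = u \<otimes> w1 [^] m" and "z = w0 \<otimes> inv w1"
    obtain T1 where T1: "T1 \<in> Sp" "T1 u = u2"
      using transvection_shift[OF p m u w1(1,2,3)] unfolding u2_def by blast
    have u2: "u2 \<in> nth_powers m"
      unfolding u2_def using subgroup.m_closed[OF subgroup_nth_powers u pow_in_nth_powers[OF w1(1)]] .
    have z: "z \<in> carrier K" "z [^] (p * m) = \<one>"
      using w0p w1 w0 unfolding z_def by (simp_all add: nat_pow_distrib nat_pow_inv)
    have "\<omega> u2 z \<noteq> 1"
      using \<omega>_shifted_pair[OF uc w0(1) w1(1) True] w1(4) v_eq unfolding u2_def z_def by simp
    then obtain T2 where T2: "T2 \<in> Sp" "T2 u2 = u2 \<otimes> z [^] m"
      using transvection_shift[OF p m u2 z] by blast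
    have "u2 \<otimes> z [^] m = v"
      unfolding u2_def z_def v_eq using uc w0(1) w1(1)
      by (simp add: nat_pow_distrib nat_pow_inv m_ac)
    then show ?thesis
      using Sp_comp[OF T2(1) T1(1)] T1(2) T2(2) by (metis comp_apply)
  qed
qed

lemma Sp_moves_if_moves_pth_powers:
  assumes p: "prime p" and m: "0 < m" and u: "u \<in> nth_powers m" and v: "v \<in> nth_powers m"
    and u_not: "u \<notin> nth_powers (p * m)" and v_not: "v \<notin> nth_powers (p * m)"
    and \<tau>: "\<tau> \<in> Sp" "\<tau> (u [^] p) = v [^] p"
  shows "\<exists>T\<in>Sp. T u = v"
proof -
  have uc: "u \<in> carrier K"
    using u nth_powers_subset by auto
  have \<tau>_iso: "\<tau> \<in> iso K K"
    using \<tau>(1) unfolding Sp_def by blast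
  have "\<tau> u \<in> nth_powers m" "\<tau> u \<notin> nth_powers (p * m)"
    using iso_mem_nth_powers_iff[OF \<tau>_iso uc] u u_not by simp_all
  moreover have "\<tau> u [^] p = v [^] p"
    using \<tau>(2) iso_nat_pow[OF \<tau>_iso uc] by simp
  ultimately obtain T where T: "T \<in> Sp" "T (\<tau> u) = v"
    using Sp_moves_equal_pth_powers[OF p m _ v _ v_not] by blast
  then show ?thesis
    using Sp_comp[OF T(1) \<tau>(1)] by (metis comp_apply)
qed

lemma Sp_moves_same_heights:
  assumes "0 < m" "u \<in> nth_powers m" "v \<in> nth_powers m" "same_heights m u v"
  shows "\<exists>\<tau>\<in>Sp. \<tau> u = v"
  using assms
proof (induction "card (nth_powers m)" arbitrary: m u v rule: less_induct)
  case less
  note m = less.prems(1) and u = less.prems(2) and v = less.prems(3) and heights = less.prems(4)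
  have uc: "u \<in> carrier K" and vc: "v \<in> carrier K"
    using u v nth_powers_subset by auto
  show ?case
  proof (cases "nth_powers m \<subseteq> {\<one>}")
    case True
    then have "u = v"
      using u v by auto
    then show ?thesis
      using Sp_id by (intro bexI[of _ "\<lambda>x. x"]) simp_all
  next
    case False
    then obtain x where "x \<in> nth_powers m" "x \<noteq> \<one>"
      by blast
    then obtain p where p_prime: "prime (p::nat)" and smaller: "card (nth_powers (p * m)) < card (nth_powers m)"
      by (rule exists_prime_card_nth_powers_less[OF finite_carrier])
    have p: "0 < p"
      using prime_gt_0_nat[OF p_prime] .
    have pm: "0 < p * m"
      using p m by simp
    show ?thesis
    proof (cases "u \<in> nth_powers (p * m)")
      case True
      moreover have "v \<in> nth_powers (p * m)"
        using True same_heights_mem_iff[OF heights p uc vc] by simp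
      ultimately show ?thesis
        using less.hyps[OF smaller pm _ _ same_heights_mult[OF heights p]] by blast
    next
      case False
      then have v_not: "v \<notin> nth_powers (p * m)"
        using same_heights_mem_iff[OF heights p uc vc] by simp
      then show ?thesis
        using less.hyps[OF smaller pm pow_mem_nth_powers_mult[OF u] pow_mem_nth_powers_mult[OF v]
            same_heights_pow[OF heights p uc vc]]
          Sp_moves_if_moves_pth_powers[OF p_prime m u v False] by blast
    qed
  qed
qed

lemma Aut_orbit_subset_Sp_orbit:
  assumes u: "u \<in> carrier K" and \<sigma>: "\<sigma> \<in> iso K K"
  shows "\<exists>\<tau>\<in>Sp. \<tau> u = \<sigma> u"
proof -
  have "\<sigma> u \<in> carrier K"
    using \<sigma> u unfolding iso_def hom_def by auto
  then have "u \<in> nth_powers 1" "\<sigma> u \<in> nth_powers 1"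
    unfolding nth_powers_1 using u by simp_all
  then show ?thesis
    using Sp_moves_same_heights[OF zero_less_one _ _ same_heights_iso[OF \<sigma> u]] by blast
qed

end

section \<open>Extending characters\<close>

definition character_on :: "('a, 'b) monoid_scheme \<Rightarrow> 'a set \<Rightarrow> ('a \<Rightarrow> complex) \<Rightarrow> bool" where
  "character_on G H \<chi> \<longleftrightarrow>
     (\<forall>x\<in>H. cmod (\<chi> x) = 1) \<and> (\<forall>x\<in>H. \<forall>y\<in>H. \<chi> (x \<otimes>\<^bsub>G\<^esub> y) = \<chi> x * \<chi> y)"

context group
begin

lemma character_on_one:
  assumes "subgroup S G" "character_on G S \<chi>"
  shows "\<chi> \<one> = 1"
proof -
  have one: "\<one> \<in> S" using assms subgroup.one_closed by blast
  then have "\<chi> (\<one> \<otimes> \<one>) = \<chi> \<one> * \<chi> \<one>" "cmod (\<chi> \<one>) = 1"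
    using assms(2) unfolding character_on_def by blast+
  then have "\<chi> \<one> * \<chi> \<one> = \<chi> \<one> * 1" "\<chi> \<one> \<noteq> 0"
    by auto
  then show ?thesis
    by (metis mult_left_cancel)
qed

lemma character_on_pow:
  assumes S: "subgroup S G" and \<chi>: "character_on G S \<chi>" and x: "x \<in> S"
  shows "\<chi> (x [^] (n::nat)) = \<chi> x ^ n"
proof (induction n)
  case 0
  then show ?case using character_on_one[OF S \<chi>] by simp
next
  case (Suc n)
  have "x [^] n \<in> S"
    using subgroup_nat_pow_closed[OF S x] .
  then show ?case
    using Suc \<chi> x unfolding character_on_def by simp
qed

lemma dual_mult: "\<alpha> \<in> dual G \<Longrightarrow> x \<in> carrier G \<Longrightarrow> y \<in> carrier G \<Longrightarrow> \<alpha> (x \<otimes> y) = \<alpha> x * \<alpha> y"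
  unfolding dual_def by blast

lemma norm_dual: "\<alpha> \<in> dual G \<Longrightarrow> x \<in> carrier G \<Longrightarrow> cmod (\<alpha> x) = 1"
  unfolding dual_def by auto

lemma dual_nonzero: "\<alpha> \<in> dual G \<Longrightarrow> x \<in> carrier G \<Longrightarrow> \<alpha> x \<noteq> 0"
  using norm_dual by fastforce

lemma character_on_dual: "\<alpha> \<in> dual G \<Longrightarrow> character_on G (carrier G) \<alpha>"
  unfolding dual_def character_on_def by auto

lemma dual_one: "\<alpha> \<in> dual G \<Longrightarrow> \<alpha> \<one> = 1"
  using character_on_one[OF subgroup_self character_on_dual] .

lemma dual_pow: "\<alpha> \<in> dual G \<Longrightarrow> x \<in> carrier G \<Longrightarrow> \<alpha> (x [^] (n::nat)) = \<alpha> x ^ n"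
  using character_on_pow[OF subgroup_self character_on_dual] .

lemma dual_inv:
  assumes "\<alpha> \<in> dual G" "x \<in> carrier G"
  shows "\<alpha> (inv x) = inverse (\<alpha> x)"
proof -
  have "\<alpha> (inv x) * \<alpha> x = 1"
    using assms dual_mult[of \<alpha> "inv x" x] dual_one[OF assms(1)] by simp
  then show ?thesis
    using dual_nonzero[OF assms] by (simp add: field_simps)
qed

lemma restrict_dual: "\<alpha> \<in> dual G \<Longrightarrow> restrict \<alpha> (carrier G) = \<alpha>"
  unfolding dual_def by (auto simp: extensional_restrict PiE_def)

lemma exists_pow_mem_subgroup_iff_dvd:
  assumes fin: "finite (carrier G)" and S: "subgroup S G" and g: "g \<in> carrier G"
  shows "\<exists>r>0. \<forall>j::nat. g [^] j \<in> S \<longleftrightarrow> r dvd j"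
proof -
  define r where "r = (LEAST r::nat. 0 < r \<and> g [^] r \<in> S)"
  have "0 < ord g \<and> g [^] ord g \<in> S"
    using ord_ge_1[OF fin g] subgroup.one_closed[OF S] g by simp
  then have r: "0 < r" "g [^] r \<in> S"
    using LeastI_ex[of "\<lambda>r. 0 < r \<and> g [^] r \<in> S"] unfolding r_def by blast+
  have r_min: "g [^] k \<notin> S" if "0 < k" "k < r" for k
    using not_less_Least[of k "\<lambda>r. 0 < r \<and> g [^] r \<in> S"] that unfolding r_def by blast
  have "r dvd j" if j: "g [^] j \<in> S" for j
  proof (rule ccontr)
    assume "\<not> r dvd j"
    then have pos: "0 < j mod r"
      by (simp add: dvd_eq_mod_eq_0)
    have "(g [^] r) [^] (j div r) \<otimes> g [^] (j mod r) = g [^] (r * (j div r) + j mod r)"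
      using g by (simp only: nat_pow_pow nat_pow_mult)
    then have "g [^] j = (g [^] r) [^] (j div r) \<otimes> g [^] (j mod r)"
      by simp
    then have "g [^] (j mod r) = inv ((g [^] r) [^] (j div r)) \<otimes> g [^] j"
      using g by (simp add: inv_solve_left)
    also have "\<dots> \<in> S"
      using subgroup_nat_pow_closed[OF S r(2)] j subgroup.m_inv_closed[OF S] subgroup.m_closed[OF S]
      by simp
    finally show False
      using r_min[OF pos] r(1) by simp
  qed
  moreover have "g [^] j \<in> S" if "r dvd j" for j
    using that subgroup_nat_pow_closed[OF S r(2)] g by (auto simp: nat_pow_pow elim!: dvdE)
  ultimately have "\<forall>j. g [^] j \<in> S \<longleftrightarrow> r dvd j"
    by blast
  with r(1) show ?thesis
    by blast
qed

end

context comm_group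
begin

lemma subgroup_mult_cyclic:
  assumes fin: "finite (carrier G)" and S: "subgroup S G" and g: "g \<in> carrier G"
  shows "subgroup {s \<otimes> g [^] (j::nat) | s j. s \<in> S} G"
    and "S \<subseteq> {s \<otimes> g [^] (j::nat) | s j. s \<in> S}"
    and "g \<in> {s \<otimes> g [^] (j::nat) | s j. s \<in> S}"
proof -
  have "{s \<otimes> g [^] (j::nat) | s j. s \<in> S} = S <#> generate G {g}"
    unfolding generate_pow_on_finite_carrier[OF fin g] set_mult_def by blast
  then show "subgroup {s \<otimes> g [^] (j::nat) | s j. s \<in> S} G"
    using mult_subgroups[OF S generate_is_subgroup] g by simp
  have "s = s \<otimes> g [^] (0::nat)" if "s \<in> S" for s
    using that subgroup.mem_carrier[OF S] by simp
  then show "S \<subseteq> {s \<otimes> g [^] (j::nat) | s j. s \<in> S}"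
    by blast
  have "g = \<one> \<otimes> g [^] (1::nat)"
    using g by simp
  then show "g \<in> {s \<otimes> g [^] (j::nat) | s j. s \<in> S}"
    using subgroup.one_closed[OF S] by blast
qed

lemma character_on_mult_pow_well_defined:
  assumes S: "subgroup S G" and \<chi>: "character_on G S \<chi>" and g: "g \<in> carrier G"
    and r: "\<And>j::nat. g [^] j \<in> S \<longleftrightarrow> r dvd j" and z: "z ^ r = \<chi> (g [^] r)"
    and s: "s \<in> S" "s' \<in> S" and eq: "s \<otimes> g [^] j = s' \<otimes> g [^] k"
  shows "\<chi> s * z ^ j = \<chi> s' * z ^ k"
proof -
  have ordered: "\<chi> s * z ^ j = \<chi> s' * z ^ k"
    if s: "s \<in> S" "s' \<in> S" and eq: "s \<otimes> g [^] j = s' \<otimes> g [^] k" and kj: "k \<le> j" for s s' j k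
  proof -
    have sc: "s \<in> carrier G" "s' \<in> carrier G"
      using s subgroup.mem_carrier[OF S] by auto
    have "(s \<otimes> g [^] (j - k)) \<otimes> g [^] k = s' \<otimes> g [^] k"
      using eq g sc kj by (simp add: m_assoc nat_pow_mult le_add_diff_inverse2)
    then have s': "s' = s \<otimes> g [^] (j - k)"
      using g sc by simp
    then have "g [^] (j - k) = inv s \<otimes> s'"
      using g sc by (simp add: inv_solve_left)
    also have "\<dots> \<in> S"
      using s subgroup.m_inv_closed[OF S] subgroup.m_closed[OF S] by simp
    finally have gS': "g [^] (j - k) \<in> S" .
    then obtain q where q: "j - k = r * q"
      using r by blast
    have "g [^] r \<in> S"
      using r by simp
    then have "\<chi> (g [^] (j - k)) = z ^ (j - k)"
      using character_on_pow[OF S \<chi>, of "g [^] r" q] z g q by (simp add: nat_pow_pow power_mult)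
    then have "\<chi> s' = \<chi> s * z ^ (j - k)"
      using s' \<chi> s gS' unfolding character_on_def by simp
    then show ?thesis
      using kj by (simp add: power_add[symmetric])
  qed
  show ?thesis
  proof (cases "k \<le> j")
    case True
    then show ?thesis
      using ordered[OF s eq] by blast
  next
    case False
    then show ?thesis
      using ordered[OF s(2,1) eq[symmetric]] by simp
  qed
qed

lemma character_on_extend_cyclic:
  assumes fin: "finite (carrier G)" and S: "subgroup S G" and \<chi>: "character_on G S \<chi>"
    and g: "g \<in> carrier G" and r: "\<And>j::nat. g [^] j \<in> S \<longleftrightarrow> r dvd j"
    and z: "cmod z = 1" "z ^ r = \<chi> (g [^] r)"
  obtains S' \<chi>' where "subgroup S' G" "S \<subseteq> S'" "g \<in> S'" "character_on G S' \<chi>'"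
    "\<forall>s\<in>S. \<chi>' s = \<chi> s" "\<chi>' g = z"
proof -
  have Sc: "S \<subseteq> carrier G" using subgroup.subset[OF S] .
  define S' where "S' = {s \<otimes> g [^] (j::nat) | s j. s \<in> S}"
  define \<chi>' where "\<chi>' x = (SOME c. \<exists>s\<in>S. \<exists>j::nat. x = s \<otimes> g [^] j \<and> c = \<chi> s * z ^ j)" for x
  have \<chi>': "\<chi>' (s \<otimes> g [^] j) = \<chi> s * z ^ j" if "s \<in> S" for s j
  proof -
    have "\<exists>s'\<in>S. \<exists>j'::nat. s \<otimes> g [^] j = s' \<otimes> g [^] j' \<and> \<chi>' (s \<otimes> g [^] j) = \<chi> s' * z ^ j'"
      unfolding \<chi>'_def by (rule someI_ex) (use that in blast)
    then show ?thesis
      using character_on_mult_pow_well_defined[OF S \<chi> g r z(2) that] by metis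
  qed
  have mult: "(s1 \<otimes> g [^] j1) \<otimes> (s2 \<otimes> g [^] j2) = (s1 \<otimes> s2) \<otimes> g [^] (j1 + j2)"
    if "s1 \<in> S" "s2 \<in> S" for s1 s2 and j1 j2 :: nat
  proof -
    have "s1 \<in> carrier G" "s2 \<in> carrier G"
      using that Sc by auto
    then show ?thesis
      using g by (simp add: nat_pow_mult[symmetric] m_ac)
  qed
  have "character_on G S' \<chi>'"
    unfolding character_on_def S'_def
  proof (safe)
    fix s j assume s: "s \<in> S"
    then have "cmod (\<chi> s) = 1"
      using \<chi> unfolding character_on_def by blast
    moreover have "\<chi>' (s \<otimes> g [^] j) = \<chi> s * z ^ j"
      by (rule \<chi>'[OF s])
    ultimately show "cmod (\<chi>' (s \<otimes> g [^] j)) = 1"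
      using z by (simp add: norm_mult norm_power)
  next
    fix s1 j1 s2 j2 assume s12: "s1 \<in> S" "s2 \<in> S"
    have "\<chi>' (s1 \<otimes> g [^] j1 \<otimes> (s2 \<otimes> g [^] j2)) = \<chi> (s1 \<otimes> s2) * z ^ (j1 + j2)"
      unfolding mult[OF s12] using \<chi>' subgroup.m_closed[OF S s12] by blast
    also have "\<dots> = (\<chi> s1 * z ^ j1) * (\<chi> s2 * z ^ j2)"
      using \<chi> s12 unfolding character_on_def by (simp add: power_add)
    finally show "\<chi>' (s1 \<otimes> g [^] j1 \<otimes> (s2 \<otimes> g [^] j2)) = \<chi>' (s1 \<otimes> g [^] j1) * \<chi>' (s2 \<otimes> g [^] j2)"
      using \<chi>' s12 by simp
  qed
  moreover have "subgroup S' G" "S \<subseteq> S'" "g \<in> S'"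
    unfolding S'_def by (fact subgroup_mult_cyclic[OF fin S g])+
  moreover have "\<chi>' s = \<chi> s" if "s \<in> S" for s
    using \<chi>'[OF that, of 0] that Sc by auto
  moreover have "\<chi>' g = z"
    using \<chi>'[OF subgroup.one_closed[OF S], of 1] g character_on_one[OF S \<chi>] by simp
  ultimately show ?thesis
    using that by blast
qed

lemma character_on_extend:
  assumes fin: "finite (carrier G)"
  shows "subgroup S G \<Longrightarrow> character_on G S \<chi> \<Longrightarrow> \<exists>\<psi>\<in>dual G. \<forall>s\<in>S. \<psi> s = \<chi> s"
proof (induction "card (carrier G - S)" arbitrary: S \<chi> rule: less_induct)
  case less
  show ?case
  proof (cases "S = carrier G")
    case True
    then have "restrict \<chi> (carrier G) \<in> dual G"
      using less.prems(2) unfolding dual_def character_on_def by auto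
    then show ?thesis
      using True by (intro bexI[of _ "restrict \<chi> (carrier G)"]) auto
  next
    case False
    then obtain g where g: "g \<in> carrier G" "g \<notin> S"
      using subgroup.subset[OF less.prems(1)] by blast
    obtain r where r: "0 < r" "\<forall>j::nat. g [^] j \<in> S \<longleftrightarrow> r dvd j"
      using exists_pow_mem_subgroup_iff_dvd[OF fin less.prems(1) g(1)] by blast
    have "g [^] r \<in> S"
      using r(2) by simp
    then have "cmod (\<chi> (g [^] r)) = 1"
      using less.prems(2) unfolding character_on_def by blast
    then obtain z where z: "cmod z = 1" "z ^ r = \<chi> (g [^] r)"
      using r(1) by (rule exists_nth_root_unit_circle)
    obtain S' \<chi>' where S': "subgroup S' G" "S \<subseteq> S'" "g \<in> S'" "character_on G S' \<chi>'"
      "\<forall>s\<in>S. \<chi>' s = \<chi> s" "\<chi>' g = z"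
      by (rule character_on_extend_cyclic[OF fin less.prems g(1) r(2)[rule_format] z])
    have "carrier G - S' \<subset> carrier G - S"
      using S' g by blast
    then have "card (carrier G - S') < card (carrier G - S)"
      using fin by (simp add: psubset_card_mono)
    then obtain \<psi> where "\<psi> \<in> dual G" "\<forall>s\<in>S'. \<psi> s = \<chi>' s"
      using less.hyps[OF _ S'(1,4)] by blast
    then show ?thesis
      using S'(2,5) by (intro bexI[of _ \<psi>]) auto
  qed
qed

lemma dual_eq_if_pow_eq:
  fixes m :: nat
  assumes \<alpha>: "\<alpha> \<in> dual G" and triv: "\<And>b. b \<in> carrier G \<Longrightarrow> b [^] m = \<one> \<Longrightarrow> \<alpha> b = 1"
    and xy: "x \<in> carrier G" "y \<in> carrier G" "x [^] m = y [^] m"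
  shows "\<alpha> x = \<alpha> y"
proof -
  have "(x \<otimes> inv y) [^] m = \<one>"
    using xy by (simp add: nat_pow_distrib nat_pow_inv)
  then have "\<alpha> x * inverse (\<alpha> y) = 1"
    using triv[of "x \<otimes> inv y"] dual_mult[OF \<alpha>] dual_inv[OF \<alpha>] xy by simp
  then show ?thesis
    using dual_nonzero[OF \<alpha> xy(2)] by (simp add: field_simps)
qed

lemma dual_nth_root_if_trivial_on_torsion:
  assumes fin: "finite (carrier G)" and \<alpha>: "\<alpha> \<in> dual G"
    and triv: "\<And>b. b \<in> carrier G \<Longrightarrow> b [^] m = \<one> \<Longrightarrow> \<alpha> b = 1"
  obtains \<gamma> where "\<gamma> \<in> dual G" "\<And>x. x \<in> carrier G \<Longrightarrow> \<gamma> x ^ m = \<alpha> x"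
proof -
  define \<chi> where "\<chi> h = \<alpha> (SOME x. x \<in> carrier G \<and> x [^] m = h)" for h
  have \<chi>: "\<chi> (x [^] m) = \<alpha> x" if "x \<in> carrier G" for x
  proof -
    have "(SOME x'. x' \<in> carrier G \<and> x' [^] m = x [^] m) \<in> carrier G \<and>
          (SOME x'. x' \<in> carrier G \<and> x' [^] m = x [^] m) [^] m = x [^] m"
      by (rule someI_ex) (use that in blast)
    then show ?thesis
      unfolding \<chi>_def using dual_eq_if_pow_eq[OF \<alpha> triv] that by blast
  qed
  have "character_on G (nth_powers m) \<chi>"
    unfolding character_on_def nth_powers_def
  proof safe
    fix x assume "x \<in> carrier G"
    then show "cmod (\<chi> (x [^] m)) = 1"
      using \<chi> norm_dual[OF \<alpha>] by simp
  next
    fix x y assume xy: "x \<in> carrier G" "y \<in> carrier G"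
    then have "x [^] m \<otimes> y [^] m = (x \<otimes> y) [^] m"
      by (simp add: nat_pow_distrib)
    then show "\<chi> (x [^] m \<otimes> y [^] m) = \<chi> (x [^] m) * \<chi> (y [^] m)"
      using xy \<chi> dual_mult[OF \<alpha>] by simp
  qed
  then obtain \<psi> where \<psi>: "\<psi> \<in> dual G" "\<forall>s\<in>nth_powers m. \<psi> s = \<chi> s"
    using character_on_extend[OF fin subgroup_nth_powers] by blast
  have "\<psi> x ^ m = \<alpha> x" if x: "x \<in> carrier G" for x
  proof -
    have "\<psi> x ^ m = \<chi> (x [^] m)"
      using dual_pow[OF \<psi>(1) x, of m] \<psi>(2) pow_in_nth_powers[OF x, of m] by simp
    then show ?thesis
      using \<chi>[OF x] by simp
  qed
  then show ?thesis
    using that \<psi>(1) by blast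
qed

lemma mem_nth_powers_if_annihilated:
  assumes fin: "finite (carrier G)" and a: "a \<in> carrier G"
    and ann: "\<And>\<beta>. \<beta> \<in> dual G \<Longrightarrow> (\<forall>x\<in>carrier G. \<beta> x ^ m = 1) \<Longrightarrow> \<beta> a = 1"
  shows "a \<in> nth_powers m"
proof (rule ccontr)
  assume a_notin: "a \<notin> nth_powers m"
  let ?H = "nth_powers m"
  have H: "subgroup ?H G" by (rule subgroup_nth_powers)
  have triv: "character_on G ?H (\<lambda>_. 1)"
    unfolding character_on_def by simp
  obtain r where r: "0 < r" "\<forall>j::nat. a [^] j \<in> ?H \<longleftrightarrow> r dvd j"
    using exists_pow_mem_subgroup_iff_dvd[OF fin H a] by blast
  have "r \<noteq> 1"
    using r(2)[rule_format, of 1] a_notin a by auto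
  then obtain z where z_norm: "cmod z = 1" and z_pow: "z ^ r = 1" and "z \<noteq> 1"
    using r(1) by (rule exists_nontrivial_root_of_unity)
  obtain S' \<chi>' where S': "subgroup S' G" "?H \<subseteq> S'" "a \<in> S'" "character_on G S' \<chi>'"
      "\<forall>s\<in>?H. \<chi>' s = 1" "\<chi>' a = z"
    by (rule character_on_extend_cyclic[OF fin H triv a r(2)[rule_format] z_norm z_pow])
  obtain \<psi> where \<psi>: "\<psi> \<in> dual G" "\<forall>s\<in>S'. \<psi> s = \<chi>' s"
    using character_on_extend[OF fin S'(1,4)] by blast
  have "\<psi> x ^ m = 1" if x: "x \<in> carrier G" for x
  proof -
    have "x [^] m \<in> nth_powers m"
      using x by blast
    then show ?thesis
      using dual_pow[OF \<psi>(1) x, of m] \<psi>(2) S'(2,5) by auto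
  qed
  then have "\<psi> a = 1"
    using ann \<psi>(1) by blast
  then show False
    using \<psi>(2) S'(3,6) \<open>z \<noteq> 1\<close> by simp
qed

lemma finite_dual:
  assumes fin: "finite (carrier G)"
  shows "finite (dual G)"
proof -
  have n: "0 < order G"
    using fin by (simp add: order_gt_0_iff_finite)
  have "dual G \<subseteq> carrier G \<rightarrow>\<^sub>E {z::complex. z ^ order G = 1}"
  proof
    fix \<chi> assume \<chi>: "\<chi> \<in> dual G"
    have "\<chi> x ^ order G = 1" if "x \<in> carrier G" for x
      using dual_pow[OF \<chi> that, of "order G", symmetric] pow_order_eq_1[OF that] dual_one[OF \<chi>]
      by simp
    then show "\<chi> \<in> carrier G \<rightarrow>\<^sub>E {z::complex. z ^ order G = 1}"
      using \<chi> unfolding dual_def by auto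
  qed
  moreover have "finite (carrier G \<rightarrow>\<^sub>E {z::complex. z ^ order G = 1})"
    using fin finite_roots_unity[of "order G"] n by (intro finite_PiE) auto
  ultimately show ?thesis
    using finite_subset by blast
qed

end

section \<open>The group \<open>A \<times> dual A\<close>\<close>

lemma KK_carrier [simp]: "carrier (KK G) = carrier G \<times> dual G"
  by (simp add: KK_def)

lemma KK_mult [simp]: "(a, \<chi>) \<otimes>\<^bsub>KK G\<^esub> (b, \<psi>) = (a \<otimes>\<^bsub>G\<^esub> b, \<lambda>x\<in>carrier G. \<chi> x * \<psi> x)"
  by (simp add: KK_def)

lemma KK_one [simp]: "\<one>\<^bsub>KK G\<^esub> = (\<one>\<^bsub>G\<^esub>, \<lambda>x\<in>carrier G. 1)"
  by (simp add: KK_def)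

lemma sympl_Pair [simp]: "sympl (a, \<alpha>) (b, \<beta>) = \<alpha> b * inverse (\<beta> a)"
  by (simp add: sympl_def)

context comm_group
begin

lemma dual_mult_closed: "\<chi> \<in> dual G \<Longrightarrow> \<psi> \<in> dual G \<Longrightarrow> (\<lambda>x\<in>carrier G. \<chi> x * \<psi> x) \<in> dual G"
  unfolding dual_def by (auto simp: norm_mult PiE_iff)

lemma dual_trivial: "(\<lambda>x\<in>carrier G. 1) \<in> dual G"
  unfolding dual_def by auto

lemma dual_inverse_closed: "\<chi> \<in> dual G \<Longrightarrow> (\<lambda>x\<in>carrier G. inverse (\<chi> x)) \<in> dual G"
  unfolding dual_def by (auto simp: norm_inverse)

lemma comm_group_KK: "comm_group (KK G)"
proof (rule comm_groupI)
  fix x y z assume x: "x \<in> carrier (KK G)" and y: "y \<in> carrier (KK G)" and z: "z \<in> carrier (KK G)"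
  obtain a \<chi> where 1: "x = (a, \<chi>)" "a \<in> carrier G" "\<chi> \<in> dual G" using x by auto
  obtain b \<psi> where 2: "y = (b, \<psi>)" "b \<in> carrier G" "\<psi> \<in> dual G" using y by auto
  obtain c \<phi> where 3: "z = (c, \<phi>)" "c \<in> carrier G" "\<phi> \<in> dual G" using z by auto
  show "x \<otimes>\<^bsub>KK G\<^esub> y \<in> carrier (KK G)"
    using 1 2 dual_mult_closed by simp
  show "x \<otimes>\<^bsub>KK G\<^esub> y \<otimes>\<^bsub>KK G\<^esub> z = x \<otimes>\<^bsub>KK G\<^esub> (y \<otimes>\<^bsub>KK G\<^esub> z)"
    using 1 2 3 by (auto simp: m_assoc restrict_def mult.assoc)
  show "x \<otimes>\<^bsub>KK G\<^esub> y = y \<otimes>\<^bsub>KK G\<^esub> x"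
    using 1 2 by (auto simp: m_comm mult.commute)
  show "\<one>\<^bsub>KK G\<^esub> \<otimes>\<^bsub>KK G\<^esub> x = x"
    using 1 restrict_dual[OF 1(3)] by (simp add: restrict_def cong: if_cong)
  have "(inv a, \<lambda>x\<in>carrier G. inverse (\<chi> x)) \<otimes>\<^bsub>KK G\<^esub> x = \<one>\<^bsub>KK G\<^esub>"
    using 1 dual_nonzero[OF 1(3)] by (auto simp: restrict_def fun_eq_iff)
  moreover have "(inv a, \<lambda>x\<in>carrier G. inverse (\<chi> x)) \<in> carrier (KK G)"
    using 1 dual_inverse_closed by simp
  ultimately show "\<exists>y\<in>carrier (KK G). y \<otimes>\<^bsub>KK G\<^esub> x = \<one>\<^bsub>KK G\<^esub>"
    by blast
next
  show "\<one>\<^bsub>KK G\<^esub> \<in> carrier (KK G)"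
    using dual_trivial by simp
qed

lemma KK_pow:
  assumes "a \<in> carrier G" "\<chi> \<in> dual G"
  shows "(a, \<chi>) [^]\<^bsub>KK G\<^esub> (n::nat) = (a [^] n, \<lambda>x\<in>carrier G. \<chi> x ^ n)"
  by (induction n) (simp_all add: restrict_def fun_eq_iff)

lemma nth_power_if_orthogonal_to_torsion_KK:
  assumes fin: "finite (carrier G)" and m: "0 < m" and u: "u \<in> carrier (KK G)"
    and orth: "\<And>v. \<lbrakk>v \<in> carrier (KK G); v [^]\<^bsub>KK G\<^esub> m = \<one>\<^bsub>KK G\<^esub>\<rbrakk> \<Longrightarrow> sympl u v = 1"
  shows "u \<in> monoid.nth_powers (KK G) m"
proof -
  interpret KK: comm_group "KK G"
    by (rule comm_group_KK)
  obtain a \<alpha> where u': "u = (a, \<alpha>)" "a \<in> carrier G" "\<alpha> \<in> dual G"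
    using u by auto
  have "\<alpha> b = 1" if b: "b \<in> carrier G" "b [^] m = \<one>" for b
  proof -
    have "(b, \<lambda>x\<in>carrier G. 1) [^]\<^bsub>KK G\<^esub> m = \<one>\<^bsub>KK G\<^esub>"
      using KK_pow[OF b(1) dual_trivial] b by (simp add: restrict_def fun_eq_iff)
    then show ?thesis
      using orth[of "(b, \<lambda>x\<in>carrier G. 1)"] b dual_trivial u' by simp
  qed
  then obtain \<gamma> where \<gamma>: "\<gamma> \<in> dual G" "\<And>x. x \<in> carrier G \<Longrightarrow> \<gamma> x ^ m = \<alpha> x"
    using dual_nth_root_if_trivial_on_torsion[OF fin u'(3)] by blast
  have "\<beta> a = 1" if \<beta>: "\<beta> \<in> dual G" "\<forall>x\<in>carrier G. \<beta> x ^ m = 1" for \<beta>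
  proof -
    have "(\<one>, \<beta>) [^]\<^bsub>KK G\<^esub> m = \<one>\<^bsub>KK G\<^esub>"
      using KK_pow[OF one_closed \<beta>(1)] \<beta>(2) by (simp add: restrict_def fun_eq_iff)
    then show ?thesis
      using orth[of "(\<one>, \<beta>)"] \<beta>(1) u' dual_one[OF u'(3)] by simp
  qed
  then have "a \<in> nth_powers m"
    using mem_nth_powers_if_annihilated[OF fin u'(2)] by blast
  then obtain a0 where a0: "a0 \<in> carrier G" "a = a0 [^] m"
    unfolding nth_powers_def by blast
  have "(a0, \<gamma>) [^]\<^bsub>KK G\<^esub> m = (a, restrict \<alpha> (carrier G))"
    using KK_pow[OF a0(1) \<gamma>(1)] a0 \<gamma>(2) by (simp add: restrict_def fun_eq_iff)
  then have "u = (a0, \<gamma>) [^]\<^bsub>KK G\<^esub> m"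
    using u' restrict_dual[OF u'(3)] by simp
  moreover have "(a0, \<gamma>) \<in> carrier (KK G)"
    using a0 \<gamma> by simp
  ultimately show ?thesis
    unfolding KK.nth_powers_def by blast
qed

lemma symplectic_group_KK:
  assumes fin: "finite (carrier G)"
  shows "symplectic_group (KK G) sympl"
proof (rule symplectic_group.intro[OF comm_group_KK], unfold_locales)
  show "finite (carrier (KK G))"
    using fin finite_dual[OF fin] by simp
next
  fix x y z assume x: "x \<in> carrier (KK G)" and y: "y \<in> carrier (KK G)" and z: "z \<in> carrier (KK G)"
  obtain a \<alpha> where 1: "x = (a, \<alpha>)" "a \<in> carrier G" "\<alpha> \<in> dual G" using x by auto
  obtain b \<beta> where 2: "y = (b, \<beta>)" "b \<in> carrier G" "\<beta> \<in> dual G" using y by auto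
  obtain c \<gamma> where 3: "z = (c, \<gamma>)" "c \<in> carrier G" "\<gamma> \<in> dual G" using z by auto
  show "sympl (x \<otimes>\<^bsub>KK G\<^esub> y) z = sympl x z * sympl y z"
    using 1 2 3 dual_mult[OF 3(3) 1(2) 2(2)] by (simp add: inverse_mult_distrib mult_ac)
  show "sympl x (y \<otimes>\<^bsub>KK G\<^esub> z) = sympl x y * sympl x z"
    using 1 2 3 dual_mult[OF 1(3) 2(2) 3(2)] by (simp add: inverse_mult_distrib mult_ac)
next
  fix x assume "x \<in> carrier (KK G)"
  then obtain a \<alpha> where "x = (a, \<alpha>)" "a \<in> carrier G" "\<alpha> \<in> dual G"
    by auto
  then show "sympl x x = 1"
    using dual_nonzero by simp
next
  fix m :: nat and u
  assume "0 < m" "u \<in> carrier (KK G)"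
    "\<And>v. \<lbrakk>v \<in> carrier (KK G); v [^]\<^bsub>KK G\<^esub> m = \<one>\<^bsub>KK G\<^esub>\<rbrakk> \<Longrightarrow> sympl u v = 1"
  then show "u \<in> monoid.nth_powers (KK G) m"
    by (rule nth_power_if_orthogonal_to_torsion_KK[OF fin])
qed

end

theorem corollary5p5:
  fixes G :: "('a, 'b) monoid_scheme"
  assumes "comm_group G" and "finite (carrier G)" and "odd (card (carrier G))"
  shows "\<forall>u\<in>carrier (KK G).
           {\<sigma> u | \<sigma>. \<sigma> \<in> SpK G} = {\<sigma> u | \<sigma>. \<sigma> \<in> AutK G}"
proof
  fix u assume u: "u \<in> carrier (KK G)"
  interpret K: symplectic_group "KK G" sympl
    using comm_group.symplectic_group_KK[OF assms(1,2)] .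
  have Sp: "SpK G = K.Sp"
    unfolding SpK_def K.Sp_def AutK_def ..
  show "{\<sigma> u | \<sigma>. \<sigma> \<in> SpK G} = {\<sigma> u | \<sigma>. \<sigma> \<in> AutK G}"
  proof
    show "{\<sigma> u | \<sigma>. \<sigma> \<in> SpK G} \<subseteq> {\<sigma> u | \<sigma>. \<sigma> \<in> AutK G}"
      unfolding SpK_def by blast
    show "{\<sigma> u | \<sigma>. \<sigma> \<in> AutK G} \<subseteq> {\<sigma> u | \<sigma>. \<sigma> \<in> SpK G}"
    proof
      fix w assume "w \<in> {\<sigma> u | \<sigma>. \<sigma> \<in> AutK G}"
      then obtain \<sigma> where "\<sigma> \<in> iso (KK G) (KK G)" "w = \<sigma> u"
        unfolding AutK_def by blast
      then obtain \<tau> where "\<tau> \<in> SpK G" "\<tau> u = w"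
        using K.Aut_orbit_subset_Sp_orbit[OF u] unfolding Sp by blast
      then show "w \<in> {\<sigma> u | \<sigma>. \<sigma> \<in> SpK G}"
        by blast
    qed
  qed
qed

end
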